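(* Let $X$ be a pure $d$-dimensional simplicial complex which is a $\gamma$-coboundary expander with coefficients in a group $G$, and let $1\le k\le d-1$. Then for every $f\in C^1(R_k(X);G)$, $\|d_1f\|\ \ge\ \gamma\cdot \mathrm{dist}\big(f, Z^1(R_k(X);G)\big)$, where norms and distances are taken in $R_k(X)$.
   Context: $X(i)$ = faces with $i+1$ elements. For a pure $D$-dimensional complex $Y$, weights $w_Y(\sigma)=|\{\tau\in Y(D):\sigma\subseteq\tau\}|/(\binom{D+1}{|\sigma|}|Y(D)|)$; norm of a set of faces = sum of weights. Link $X_\sigma=\{\tau\setminus\sigma:\sigma\subseteq\tau\in X\}$. Cochains: $C^0(Y;G)$ functions on vertices; $C^1(Y;G)$ functions $f$ on ordered edges with $f(v,u)=f(u,v)^{-1}$; $d_0g(u,v)=g(u)g(v)^{-1}$; $d_1f(u,v,w)=f(u,v)f(v,w)f(w,u)$ on triangles; $B^0$ = constants, $B^1=\mathrm{im}\,d_0$, $Z^1=\{f:d_1f\equiv1\}$; $\|f\|$ = norm of the set of faces where $f\ne1$, $\mathrm{dist}(f,g)=\|fg^{-1}\|$. $h_0(Y;G)=\min_{g\notin B^0}\|d_0g\|/\mathrm{dist}(g,B^0)$, $h_1(Y;G)=\min_{f\notin B^1}\|d_1f\|/\mathrm{dist}(f,B^1)$; $X$ is a $\gamma$-coboundary expander with coefficients in $G$ if $h_0(X_\sigma;G),h_1(X_\sigma;G)\ge\gamma$ for every face $\sigma$ of dimension $<d-2$ (including $\emptyset$). The $k$-th representation complex $R_k(X)$: its vertices are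 the faces in $X(k)$; for $1\le i\le d-k$ its $i$-faces are the sets $S$ of $i+1$ distinct elements of $X(k)$ with $\bigcup S\in X(i+k)$ and $|\bigcap S|=k$; plus the empty face. It is pure of dimension $d-k$ with its own weights. *)

theory Defs
  imports Complex_Main "HOL-Algebra.Group"
begin

definition simplicial_complex :: "'v set set \<Rightarrow> bool" where
  "simplicial_complex X \<longleftrightarrow> finite X \<and> (\<forall>s\<in>X. finite s) \<and> {} \<in> X \<and>
     (\<forall>s\<in>X. \<forall>t. t \<subseteq> s \<longrightarrow> t \<in> X)"

definition faces :: "'v set set \<Rightarrow> nat \<Rightarrow> 'v set set" where
  "faces X i = {s \<in> X. card s = i + 1}"

definition pure :: "'v set set \<Rightarrow> nat \<Rightarrow> bool" where
  "pure X D \<longleftrightarrow> (\<forall>s\<in>X. card s \<le> D + 1) \<and> (\<forall>s\<in>X. \<exists>t\<in>faces X D. s \<subseteq> t)"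

definition link :: "'v set set \<Rightarrow> 'v set \<Rightarrow> 'v set set" where
  "link X \<sigma> = {t - \<sigma> | t. t \<in> X \<and> \<sigma> \<subseteq> t}"

definition weight :: "'v set set \<Rightarrow> nat \<Rightarrow> 'v set \<Rightarrow> real" where
  "weight Y D \<sigma> = real (card {\<tau> \<in> faces Y D. \<sigma> \<subseteq> \<tau>}) /
      (real ((D + 1) choose card \<sigma>) * real (card (faces Y D)))"

definition cnorm :: "'v set set \<Rightarrow> nat \<Rightarrow> 'v set set \<Rightarrow> real" where
  "cnorm Y D A = (\<Sum>\<sigma>\<in>A. weight Y D \<sigma>)"

definition is_edge :: "'v set set \<Rightarrow> 'v \<Rightarrow> 'v \<Rightarrow> bool" where
  "is_edge Y u v \<longleftrightarrow> u \<noteq> v \<and> {u, v} \<in> Y"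

definition is_tri :: "'v set set \<Rightarrow> 'v \<Rightarrow> 'v \<Rightarrow> 'v \<Rightarrow> bool" where
  "is_tri Y u v w \<longleftrightarrow> u \<noteq> v \<and> v \<noteq> w \<and> u \<noteq> w \<and> {u, v, w} \<in> Y"

definition C0 :: "'v set set \<Rightarrow> ('g, 'b) monoid_scheme \<Rightarrow> ('v \<Rightarrow> 'g) set" where
  "C0 Y G = {g. \<forall>v. ({v} \<in> Y \<longrightarrow> g v \<in> carrier G) \<and> ({v} \<notin> Y \<longrightarrow> g v = \<one>\<^bsub>G\<^esub>)}"

definition C1 :: "'v set set \<Rightarrow> ('g, 'b) monoid_scheme \<Rightarrow> ('v \<times> 'v \<Rightarrow> 'g) set" where
  "C1 Y G = {f. \<forall>u v. (is_edge Y u v \<longrightarrow> f (u, v) \<in> carrier G \<and> f (v, u) = inv\<^bsub>G\<^esub> (f (u, v)))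
                   \<and> (\<not> is_edge Y u v \<longrightarrow> f (u, v) = \<one>\<^bsub>G\<^esub>)}"

definition d0 :: "'v set set \<Rightarrow> ('g, 'b) monoid_scheme \<Rightarrow> ('v \<Rightarrow> 'g) \<Rightarrow> ('v \<times> 'v \<Rightarrow> 'g)" where
  "d0 Y G g = (\<lambda>(u, v). if is_edge Y u v then g u \<otimes>\<^bsub>G\<^esub> inv\<^bsub>G\<^esub> (g v) else \<one>\<^bsub>G\<^esub>)"

definition d1 :: "'v set set \<Rightarrow> ('g, 'b) monoid_scheme \<Rightarrow> ('v \<times> 'v \<Rightarrow> 'g) \<Rightarrow> ('v \<times> 'v \<times> 'v \<Rightarrow> 'g)" where
  "d1 Y G f = (\<lambda>(u, v, w). if is_tri Y u v w
       then f (u, v) \<otimes>\<^bsub>G\<^esub> f (v, w) \<otimes>\<^bsub>G\<^esub> f (w, u) else \<one>\<^bsub>G\<^esub>)"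

definition B0 :: "'v set set \<Rightarrow> ('g, 'b) monoid_scheme \<Rightarrow> ('v \<Rightarrow> 'g) set" where
  "B0 Y G = {g \<in> C0 Y G. \<exists>c \<in> carrier G. \<forall>v. {v} \<in> Y \<longrightarrow> g v = c}"

definition B1 :: "'v set set \<Rightarrow> ('g, 'b) monoid_scheme \<Rightarrow> ('v \<times> 'v \<Rightarrow> 'g) set" where
  "B1 Y G = d0 Y G ` C0 Y G"

definition Z1 :: "'v set set \<Rightarrow> ('g, 'b) monoid_scheme \<Rightarrow> ('v \<times> 'v \<Rightarrow> 'g) set" where
  "Z1 Y G = {f \<in> C1 Y G. \<forall>u v w. is_tri Y u v w \<longrightarrow> d1 Y G f (u, v, w) = \<one>\<^bsub>G\<^esub>}"

definition supp0 :: "'v set set \<Rightarrow> ('g, 'b) monoid_scheme \<Rightarrow> ('v \<Rightarrow> 'g) \<Rightarrow> 'v set set" where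
  "supp0 Y G g = {{v} | v. {v} \<in> Y \<and> g v \<noteq> \<one>\<^bsub>G\<^esub>}"

definition supp1 :: "'v set set \<Rightarrow> ('g, 'b) monoid_scheme \<Rightarrow> ('v \<times> 'v \<Rightarrow> 'g) \<Rightarrow> 'v set set" where
  "supp1 Y G f = {{u, v} | u v. is_edge Y u v \<and> f (u, v) \<noteq> \<one>\<^bsub>G\<^esub>}"

definition supp2 :: "'v set set \<Rightarrow> ('g, 'b) monoid_scheme \<Rightarrow> ('v \<times> 'v \<times> 'v \<Rightarrow> 'g) \<Rightarrow> 'v set set" where
  "supp2 Y G h = {{u, v, w} | u v w. is_tri Y u v w \<and> h (u, v, w) \<noteq> \<one>\<^bsub>G\<^esub>}"

definition dist0 :: "'v set set \<Rightarrow> nat \<Rightarrow> ('g, 'b) monoid_scheme \<Rightarrow> ('v \<Rightarrow> 'g) \<Rightarrow> ('v \<Rightarrow> 'g) set \<Rightarrow> real" where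
  "dist0 Y D G g S = Inf ((\<lambda>h. cnorm Y D (supp0 Y G (\<lambda>v. g v \<otimes>\<^bsub>G\<^esub> inv\<^bsub>G\<^esub> (h v)))) ` S)"

definition dist1 :: "'v set set \<Rightarrow> nat \<Rightarrow> ('g, 'b) monoid_scheme \<Rightarrow> ('v \<times> 'v \<Rightarrow> 'g) \<Rightarrow> ('v \<times> 'v \<Rightarrow> 'g) set \<Rightarrow> real" where
  "dist1 Y D G f S = Inf ((\<lambda>h. cnorm Y D (supp1 Y G (\<lambda>e. f e \<otimes>\<^bsub>G\<^esub> inv\<^bsub>G\<^esub> (h e)))) ` S)"

text \<open>h_0(Y;G) \<ge> \<gamma> and h_1(Y;G) \<ge> \<gamma> (Y pure of dimension D), i.e. every ratio in the minimum
  defining h_i is at least \<gamma> (denominators are positive off B^i).\<close>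
definition h0_ge :: "'v set set \<Rightarrow> nat \<Rightarrow> ('g, 'b) monoid_scheme \<Rightarrow> real \<Rightarrow> bool" where
  "h0_ge Y D G \<gamma> \<longleftrightarrow> (\<forall>g \<in> C0 Y G. g \<notin> B0 Y G \<longrightarrow>
      cnorm Y D (supp1 Y G (d0 Y G g)) / dist0 Y D G g (B0 Y G) \<ge> \<gamma>)"

definition h1_ge :: "'v set set \<Rightarrow> nat \<Rightarrow> ('g, 'b) monoid_scheme \<Rightarrow> real \<Rightarrow> bool" where
  "h1_ge Y D G \<gamma> \<longleftrightarrow> (\<forall>f \<in> C1 Y G. f \<notin> B1 Y G \<longrightarrow>
      cnorm Y D (supp2 Y G (d1 Y G f)) / dist1 Y D G f (B1 Y G) \<ge> \<gamma>)"

text \<open>\<gamma>-coboundary expander: for every face \<sigma> of dimension < d-2 (including the empty face),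
  i.e. |\<sigma>| - 1 < d - 2, the link X_\<sigma> (pure of dimension d - |\<sigma>|) has h_0, h_1 \<ge> \<gamma>.\<close>
definition coboundary_expander :: "'v set set \<Rightarrow> nat \<Rightarrow> ('g, 'b) monoid_scheme \<Rightarrow> real \<Rightarrow> bool" where
  "coboundary_expander X d G \<gamma> \<longleftrightarrow> (\<forall>\<sigma> \<in> X. int (card \<sigma>) - 1 < int d - 2 \<longrightarrow>
      h0_ge (link X \<sigma>) (d - card \<sigma>) G \<gamma> \<and> h1_ge (link X \<sigma>) (d - card \<sigma>) G \<gamma>)"

definition rep_complex :: "'v set set \<Rightarrow> nat \<Rightarrow> nat \<Rightarrow> 'v set set set" where
  "rep_complex X d k = {{}} \<union> {{s} | s. s \<in> faces X k} \<union>
     {S. \<exists>i. 1 \<le> i \<and> i \<le> d - k \<and> card S = i + 1 \<and> S \<subseteq> faces X k \<and>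
          \<Union>S \<in> faces X (i + k) \<and> card (\<Inter>S) = k}"

end

theory Submission
  imports Defs
begin

text \<open>
  A face of \<open>R\<^sub>k(X)\<close> with at least two vertices is \<open>{\<tau> \<union> {u} | u \<in> A}\<close>, where
  \<open>\<tau>\<close> (the common intersection) is a \<open>(k-1)\<close>-face of \<open>X\<close> and \<open>A\<close> is a face of the link
  \<open>X\<^sub>\<tau>\<close>. So the edges and triangles of \<open>R\<^sub>k(X)\<close> split into the edges and triangles of
  the links, and the weights of \<open>R\<^sub>k(X)\<close> restrict to those of \<open>X\<^sub>\<tau>\<close> up to the factor
  \<open>|X\<^sub>\<tau>(d-k)| / |R\<^sub>k(X)(d-k)|\<close>: every norm on \<open>R\<^sub>k(X)\<close> is a weighted sum of norms on
  the links.

  Given \<open>f\<close>, restrict it to every link \<open>X\<^sub>\<tau>\<close>. Since \<open>B\<^sup>1 \<subseteq> Z\<^sup>1\<close>, coboundary expansion of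
  \<open>X\<^sub>\<tau>\<close> yields a cocycle \<open>h\<^sub>\<tau>\<close> on the link with \<open>\<gamma> \<parallel>f\<^sub>\<tau> h\<^sub>\<tau>\<^sup>-\<^sup>1\<parallel> \<le> \<parallel>d f\<^sub>\<tau>\<parallel>\<close>. As every edge and
  every triangle of \<open>R\<^sub>k(X)\<close> lies in exactly one link, the \<open>h\<^sub>\<tau>\<close> glue to a cocycle on
  \<open>R\<^sub>k(X)\<close>, and summing the local inequalities gives the global one. If \<open>d - k = 1\<close>,
  \<open>R\<^sub>k(X)\<close> has no triangles and every 1-cochain is a cocycle.
\<close>

lemma two_le_cardE:
  assumes "2 \<le> card A"
  obtains u v where "u \<in> A" "v \<in> A" "u \<noteq> v"
proof -
  obtain B where "B \<subseteq> A" "card B = 2"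
    using obtain_subset_with_card_n[OF assms] by blast
  then obtain u v where "B = {u, v}" "u \<noteq> v"
    by (auto simp: card_2_iff)
  with \<open>B \<subseteq> A\<close> show ?thesis
    by (intro that[of u v]) auto
qed

lemma subset_card_SucE:
  assumes "finite s" "\<tau> \<subseteq> s" "card s = Suc (card \<tau>)"
  obtains x where "x \<notin> \<tau>" "s = insert x \<tau>"
proof -
  have "card (s - \<tau>) = 1"
    using assms by (simp add: card_Diff_subset finite_subset)
  then obtain x where "s - \<tau> = {x}"
    by (auto simp: card_1_singleton_iff)
  then show ?thesis
    using that assms(2) by blast
qed

section \<open>Cochains, distances and cocycle expansion\<close>

lemma simplicial_complex_subset_closed:
  "simplicial_complex X \<Longrightarrow> s \<in> X \<Longrightarrow> t \<subseteq> s \<Longrightarrow> t \<in> X"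
  by (auto simp: simplicial_complex_def)

lemma simplicial_complex_finite: "simplicial_complex X \<Longrightarrow> finite X"
  by (simp add: simplicial_complex_def)

lemma finite_faces: "simplicial_complex X \<Longrightarrow> finite (faces X i)"
  by (simp add: faces_def simplicial_complex_finite)

lemma simplicial_complex_finite_face: "simplicial_complex X \<Longrightarrow> s \<in> X \<Longrightarrow> finite s"
  by (simp add: simplicial_complex_def)

lemma cnorm_nonneg: "0 \<le> cnorm Y D A"
  unfolding cnorm_def weight_def by (simp add: sum_nonneg)

lemma is_edge_sym: "is_edge Y u v \<Longrightarrow> is_edge Y v u"
  by (auto simp: is_edge_def insert_commute)

lemma supp1_subset: "supp1 Y G f \<subseteq> Y"
  by (auto simp: supp1_def is_edge_def)

lemma finite_dist1_values:
  assumes "finite Y"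
  shows "finite ((\<lambda>h. cnorm Y D (supp1 Y G (\<lambda>e. f e \<otimes>\<^bsub>G\<^esub> inv\<^bsub>G\<^esub> h e))) ` S)"
proof (rule finite_subset)
  show "(\<lambda>h. cnorm Y D (supp1 Y G (\<lambda>e. f e \<otimes>\<^bsub>G\<^esub> inv\<^bsub>G\<^esub> h e))) ` S \<subseteq> cnorm Y D ` Pow Y"
    using supp1_subset by blast
qed (use assms in simp)

lemma dist1_le:
  assumes "finite Y" "h \<in> S"
  shows "dist1 Y D G f S \<le> cnorm Y D (supp1 Y G (\<lambda>e. f e \<otimes>\<^bsub>G\<^esub> inv\<^bsub>G\<^esub> h e))"
  unfolding dist1_def
  using assms by (intro cInf_lower bdd_below_finite finite_dist1_values) auto

lemma dist1_attained:
  assumes "finite Y" "S \<noteq> {}"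
  obtains h where "h \<in> S" "dist1 Y D G f S = cnorm Y D (supp1 Y G (\<lambda>e. f e \<otimes>\<^bsub>G\<^esub> inv\<^bsub>G\<^esub> h e))"
proof -
  let ?V = "(\<lambda>h. cnorm Y D (supp1 Y G (\<lambda>e. f e \<otimes>\<^bsub>G\<^esub> inv\<^bsub>G\<^esub> h e))) ` S"
  have "finite ?V" "?V \<noteq> {}"
    using finite_dist1_values[OF assms(1)] assms(2) by auto
  then have "Inf ?V \<in> ?V"
    by (simp add: cInf_eq_Min)
  then show ?thesis
    using that unfolding dist1_def by blast
qed

lemma dist1_nonneg: "finite Y \<Longrightarrow> S \<noteq> {} \<Longrightarrow> 0 \<le> dist1 Y D G f S"
  by (metis dist1_attained cnorm_nonneg)

lemma dist1_eq_0:
  assumes "group G" "finite Y" "f \<in> C1 Y G" "f \<in> S"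
  shows "dist1 Y D G f S = 0"
proof -
  have "supp1 Y G (\<lambda>e. f e \<otimes>\<^bsub>G\<^esub> inv\<^bsub>G\<^esub> f e) = {}"
    using assms(1,3) by (auto simp: supp1_def C1_def group.r_inv)
  then have "dist1 Y D G f S \<le> 0"
    using dist1_le[OF assms(2,4), of D G f] by (simp add: cnorm_def)
  moreover have "0 \<le> dist1 Y D G f S"
    using dist1_nonneg[OF assms(2)] assms(4) by blast
  ultimately show ?thesis
    by linarith
qed

lemma one_in_C0: "group G \<Longrightarrow> (\<lambda>v. \<one>\<^bsub>G\<^esub>) \<in> C0 Y G"
  by (simp add: C0_def group.is_monoid monoid.one_closed)

lemma B1_nonempty: "group G \<Longrightarrow> B1 Y G \<noteq> {}"
  using one_in_C0 by (auto simp: B1_def)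

lemma one_in_Z1: "group G \<Longrightarrow> (\<lambda>e. \<one>\<^bsub>G\<^esub>) \<in> Z1 Y G"
  by (auto simp: Z1_def C1_def d1_def group.is_monoid monoid.one_closed monoid.inv_one)

lemma d0_in_C1:
  assumes "group G" "g \<in> C0 Y G"
  shows "d0 Y G g \<in> C1 Y G"
proof -
  interpret group G by fact
  have "g v \<in> carrier G" for v
    using assms(2) by (cases "{v} \<in> Y") (auto simp: C0_def)
  moreover have "is_edge Y v u" if "is_edge Y u v" for u v
    using that by (rule is_edge_sym)
  ultimately show ?thesis
    by (auto simp: C1_def d0_def inv_mult_group)
qed

lemma d1_d0:
  assumes "simplicial_complex Y" "group G" "g \<in> C0 Y G" "is_tri Y u v w"
  shows "d1 Y G (d0 Y G g) (u, v, w) = \<one>\<^bsub>G\<^esub>"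
proof -
  interpret group G by fact
  have g: "g x \<in> carrier G" for x
    using assms(3) by (cases "{x} \<in> Y") (auto simp: C0_def)
  have "is_edge Y u v" "is_edge Y v w" "is_edge Y w u"
    using assms(4) simplicial_complex_subset_closed[OF assms(1)]
    by (auto simp: is_tri_def is_edge_def)
  moreover have "g u \<otimes>\<^bsub>G\<^esub> inv\<^bsub>G\<^esub> g v \<otimes>\<^bsub>G\<^esub> (g v \<otimes>\<^bsub>G\<^esub> inv\<^bsub>G\<^esub> g w)
      \<otimes>\<^bsub>G\<^esub> (g w \<otimes>\<^bsub>G\<^esub> inv\<^bsub>G\<^esub> g u) = \<one>\<^bsub>G\<^esub>"
  proof -
    have cancel: "inv\<^bsub>G\<^esub> a \<otimes>\<^bsub>G\<^esub> (a \<otimes>\<^bsub>G\<^esub> b) = b" if "a \<in> carrier G" "b \<in> carrier G" for a b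
      using that by (simp flip: m_assoc)
    show ?thesis
      using g by (simp add: m_assoc cancel)
  qed
  ultimately show ?thesis
    using assms(4) by (simp add: d1_def d0_def)
qed

lemma B1_subset_Z1: "simplicial_complex Y \<Longrightarrow> group G \<Longrightarrow> B1 Y G \<subseteq> Z1 Y G"
  by (auto simp: B1_def Z1_def d0_in_C1 d1_d0)

lemma dist1_Z1_le_dist1_B1:
  assumes "simplicial_complex Y" "group G"
  shows "dist1 Y D G f (Z1 Y G) \<le> dist1 Y D G f (B1 Y G)"
proof -
  have fin: "finite Y"
    using assms(1) by (rule simplicial_complex_finite)
  obtain h where "h \<in> B1 Y G"
    "dist1 Y D G f (B1 Y G) = cnorm Y D (supp1 Y G (\<lambda>e. f e \<otimes>\<^bsub>G\<^esub> inv\<^bsub>G\<^esub> h e))"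
    by (rule dist1_attained[OF fin B1_nonempty[OF assms(2)]])
  then show ?thesis
    using dist1_le[OF fin] B1_subset_Z1[OF assms] by (metis subsetD)
qed

lemma nearest_cocycles:
  assumes "group G" "\<And>i. i \<in> I \<Longrightarrow> finite (Y i)"
  obtains h where "\<forall>i\<in>I. h i \<in> Z1 (Y i) G \<and>
    dist1 (Y i) D G (f i) (Z1 (Y i) G) = cnorm (Y i) D (supp1 (Y i) G (\<lambda>e. f i e \<otimes>\<^bsub>G\<^esub> inv\<^bsub>G\<^esub> h i e))"
proof -
  have "\<forall>i\<in>I. \<exists>h. h \<in> Z1 (Y i) G \<and>
    dist1 (Y i) D G (f i) (Z1 (Y i) G) = cnorm (Y i) D (supp1 (Y i) G (\<lambda>e. f i e \<otimes>\<^bsub>G\<^esub> inv\<^bsub>G\<^esub> h e))"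
  proof
    fix i assume "i \<in> I"
    have "Z1 (Y i) G \<noteq> {}"
      using one_in_Z1[OF assms(1)] by blast
    then obtain h where "h \<in> Z1 (Y i) G"
      "dist1 (Y i) D G (f i) (Z1 (Y i) G) = cnorm (Y i) D (supp1 (Y i) G (\<lambda>e. f i e \<otimes>\<^bsub>G\<^esub> inv\<^bsub>G\<^esub> h e))"
      by (rule dist1_attained[OF assms(2)[OF \<open>i \<in> I\<close>]])
    then show "\<exists>h. h \<in> Z1 (Y i) G \<and>
      dist1 (Y i) D G (f i) (Z1 (Y i) G) = cnorm (Y i) D (supp1 (Y i) G (\<lambda>e. f i e \<otimes>\<^bsub>G\<^esub> inv\<^bsub>G\<^esub> h e))"
      by (intro exI conjI)
  qed
  then show ?thesis
    by (rule exE[OF bchoice]) (rule that)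
qed

definition cocycle_expansion_ge :: "'v set set \<Rightarrow> nat \<Rightarrow> ('g, 'b) monoid_scheme \<Rightarrow> real \<Rightarrow> bool" where
  "cocycle_expansion_ge Y D G \<gamma> \<longleftrightarrow> (\<forall>f \<in> C1 Y G.
      \<gamma> * dist1 Y D G f (Z1 Y G) \<le> cnorm Y D (supp2 Y G (d1 Y G f)))"

lemma cocycle_expansion_ge_nonpos:
  assumes "group G" "finite Y" "\<gamma> \<le> 0"
  shows "cocycle_expansion_ge Y D G \<gamma>"
  unfolding cocycle_expansion_ge_def
proof
  fix f
  have "0 \<le> dist1 Y D G f (Z1 Y G)"
    using dist1_nonneg[OF assms(2)] one_in_Z1[OF assms(1)] by blast
  then have "\<gamma> * dist1 Y D G f (Z1 Y G) \<le> 0"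
    using assms(3) by (rule mult_nonpos_nonneg[rotated])
  then show "\<gamma> * dist1 Y D G f (Z1 Y G) \<le> cnorm Y D (supp2 Y G (d1 Y G f))"
    using cnorm_nonneg order_trans by blast
qed

lemma cocycle_expansion_ge_no_triangles:
  assumes "group G" "finite Y" "\<And>u v w. \<not> is_tri Y u v w"
  shows "cocycle_expansion_ge Y D G \<gamma>"
proof -
  have "Z1 Y G = C1 Y G"
    using assms(3) by (auto simp: Z1_def)
  then show ?thesis
    using dist1_eq_0[OF assms(1,2)] cnorm_nonneg by (auto simp: cocycle_expansion_ge_def)
qed

lemma cocycle_expansion_ge_if_h1_ge:
  assumes "simplicial_complex Y" "group G" "h1_ge Y D G \<gamma>"
  shows "cocycle_expansion_ge Y D G \<gamma>"
proof (cases "\<gamma> \<le> 0")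
  case True
  then show ?thesis
    using cocycle_expansion_ge_nonpos[OF assms(2) simplicial_complex_finite[OF assms(1)]] by blast
next
  case False
  have fin: "finite Y"
    using assms(1) by (rule simplicial_complex_finite)
  show ?thesis
    unfolding cocycle_expansion_ge_def
  proof
    fix f assume f: "f \<in> C1 Y G"
    show "\<gamma> * dist1 Y D G f (Z1 Y G) \<le> cnorm Y D (supp2 Y G (d1 Y G f))"
    proof (cases "f \<in> B1 Y G")
      case True
      then have "f \<in> Z1 Y G"
        using B1_subset_Z1[OF assms(1,2)] by blast
      then show ?thesis
        by (simp add: dist1_eq_0[OF assms(2) fin f] cnorm_nonneg)
    next
      case f_B1: False
      have ratio: "\<gamma> \<le> cnorm Y D (supp2 Y G (d1 Y G f)) / dist1 Y D G f (B1 Y G)"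
        using assms(3) f f_B1 by (auto simp: h1_ge_def)
      \<comment> \<open>A zero denominator would make the ratio 0 and force \<open>\<gamma> \<le> 0\<close>.\<close>
      have "0 < dist1 Y D G f (B1 Y G)"
        using ratio False dist1_nonneg[OF fin B1_nonempty[OF assms(2), of Y], of D G f]
        by (cases "dist1 Y D G f (B1 Y G) = 0") auto
      then have "\<gamma> * dist1 Y D G f (B1 Y G) \<le> cnorm Y D (supp2 Y G (d1 Y G f))"
        using ratio by (simp add: pos_le_divide_eq mult.commute)
      moreover have "\<gamma> * dist1 Y D G f (Z1 Y G) \<le> \<gamma> * dist1 Y D G f (B1 Y G)"
        using dist1_Z1_le_dist1_B1[OF assms(1,2)] False by simp
      ultimately show ?thesis
        by linarith
    qed
  qed
qed

section \<open>Links and lifted faces\<close>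

lemma mem_link_iff: "A \<in> link X \<tau> \<longleftrightarrow> A \<inter> \<tau> = {} \<and> A \<union> \<tau> \<in> X"
proof
  assume "A \<in> link X \<tau>"
  then obtain t where "t \<in> X" "\<tau> \<subseteq> t" "A = t - \<tau>"
    by (auto simp: link_def)
  then show "A \<inter> \<tau> = {} \<and> A \<union> \<tau> \<in> X"
    by (auto simp: Un_absorb2)
next
  assume "A \<inter> \<tau> = {} \<and> A \<union> \<tau> \<in> X"
  moreover have "A = (A \<union> \<tau>) - \<tau>" if "A \<inter> \<tau> = {}"
    using that by blast
  ultimately show "A \<in> link X \<tau>"
    unfolding link_def by blast
qed

lemma is_edge_link_iff:
  "is_edge (link X \<tau>) u v \<longleftrightarrow> u \<noteq> v \<and> u \<notin> \<tau> \<and> v \<notin> \<tau> \<and> insert u (insert v \<tau>) \<in> X"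
  by (auto simp: is_edge_def mem_link_iff)

lemma is_tri_link_iff:
  "is_tri (link X \<tau>) u v w \<longleftrightarrow> u \<noteq> v \<and> v \<noteq> w \<and> u \<noteq> w \<and> u \<notin> \<tau> \<and> v \<notin> \<tau> \<and> w \<notin> \<tau>
     \<and> insert u (insert v (insert w \<tau>)) \<in> X"
  by (auto simp: is_tri_def mem_link_iff)

lemma link_subset_closed:
  assumes "simplicial_complex X" "A \<in> link X \<tau>" "B \<subseteq> A"
  shows "B \<in> link X \<tau>"
  using assms simplicial_complex_subset_closed[OF assms(1), of "A \<union> \<tau>" "B \<union> \<tau>"]
  by (auto simp: mem_link_iff)

lemma simplicial_complex_link:
  assumes "simplicial_complex X" "\<tau> \<in> X"
  shows "simplicial_complex (link X \<tau>)"
proof -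
  have "link X \<tau> \<subseteq> (\<lambda>t. t - \<tau>) ` X"
    by (auto simp: link_def)
  then have "finite (link X \<tau>)"
    using simplicial_complex_finite[OF assms(1)] finite_surj by blast
  moreover have "\<forall>s\<in>link X \<tau>. finite s"
    using simplicial_complex_finite_face[OF assms(1)] by (metis finite_Un mem_link_iff)
  moreover have "{} \<in> link X \<tau>"
    using assms(2) by (simp add: mem_link_iff)
  moreover have "t \<in> link X \<tau>" if "s \<in> link X \<tau>" "t \<subseteq> s" for s t
    using assms(1) that by (rule link_subset_closed)
  ultimately show ?thesis
    unfolding simplicial_complex_def by blast
qed

lemma is_tri_link_edges:
  assumes "simplicial_complex X" "is_tri (link X \<tau>) u v w"
  shows "is_edge (link X \<tau>) u v" "is_edge (link X \<tau>) v w" "is_edge (link X \<tau>) w u"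
proof -
  have face: "insert u (insert v (insert w \<tau>)) \<in> X"
    using assms(2) by (simp add: is_tri_link_iff)
  have "insert u (insert v \<tau>) \<in> X" "insert v (insert w \<tau>) \<in> X" "insert w (insert u \<tau>) \<in> X"
    by (auto intro: simplicial_complex_subset_closed[OF assms(1) face])
  then show "is_edge (link X \<tau>) u v" "is_edge (link X \<tau>) v w" "is_edge (link X \<tau>) w u"
    using assms(2) by (auto simp: is_tri_link_iff is_edge_link_iff)
qed

definition lift :: "'v set \<Rightarrow> 'v set \<Rightarrow> 'v set set" where
  "lift \<tau> A = (\<lambda>x. insert x \<tau>) ` A"

lemma lift_insert: "lift \<tau> (insert u A) = insert (insert u \<tau>) (lift \<tau> A)"
  and lift_empty: "lift \<tau> {} = {}"
  by (simp_all add: lift_def)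

lemma insert_mem_lift_iff:
  assumes "u \<notin> \<tau>"
  shows "insert u \<tau> \<in> lift \<tau> A \<longleftrightarrow> u \<in> A"
proof
  assume "insert u \<tau> \<in> lift \<tau> A"
  then obtain x where "x \<in> A" "insert u \<tau> = insert x \<tau>"
    by (auto simp: lift_def)
  then show "u \<in> A"
    using assms by (metis insertCI insertE)
qed (simp add: lift_def)

lemma inj_on_lift: "inj_on (lift \<tau>) {A. A \<inter> \<tau> = {}}"
proof (rule inj_onI)
  fix A B assume "A \<in> {A. A \<inter> \<tau> = {}}" "B \<in> {A. A \<inter> \<tau> = {}}" "lift \<tau> A = lift \<tau> B"
  then have "x \<in> A \<longleftrightarrow> x \<in> B" for x
    using insert_mem_lift_iff[of x \<tau>] by (cases "x \<in> \<tau>") auto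
  then show "A = B"
    by blast
qed

lemma card_lift: "A \<inter> \<tau> = {} \<Longrightarrow> card (lift \<tau> A) = card A"
  unfolding lift_def by (rule card_image) (auto intro!: inj_onI simp: insert_ident)

lemma Union_lift: "A \<noteq> {} \<Longrightarrow> \<Union>(lift \<tau> A) = A \<union> \<tau>"
  by (auto simp: lift_def)

lemma Inter_lift:
  assumes "A \<inter> \<tau> = {}" "2 \<le> card A"
  shows "\<Inter>(lift \<tau> A) = \<tau>"
proof -
  obtain u v where "u \<in> A" "v \<in> A" "u \<noteq> v"
    using assms(2) two_le_cardE by blast
  then show ?thesis
    using assms(1) by (auto simp: lift_def)
qed

lemma lift_eq_lift_imp_eq:
  assumes "A \<inter> \<tau> = {}" "2 \<le> card A" "B \<inter> \<sigma> = {}" "2 \<le> card B" "lift \<tau> A = lift \<sigma> B"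
  shows "\<tau> = \<sigma>"
  using Inter_lift[OF assms(1,2)] Inter_lift[OF assms(3,4)] assms(5) by simp

lemma eq_lift_Union_Diff:
  assumes "\<And>s. s \<in> S \<Longrightarrow> \<exists>x. x \<notin> \<tau> \<and> s = insert x \<tau>"
  shows "S = lift \<tau> (\<Union>S - \<tau>)"
proof (intro equalityI subsetI)
  fix s assume "s \<in> S"
  then obtain x where "x \<notin> \<tau>" "s = insert x \<tau>"
    using assms by blast
  then show "s \<in> lift \<tau> (\<Union>S - \<tau>)"
    using \<open>s \<in> S\<close> by (auto simp: lift_def)
next
  fix s assume "s \<in> lift \<tau> (\<Union>S - \<tau>)"
  then obtain x t where "x \<in> t" "t \<in> S" "x \<notin> \<tau>" "s = insert x \<tau>"
    by (auto simp: lift_def)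
  moreover obtain y where "t = insert y \<tau>"
    using assms[OF \<open>t \<in> S\<close>] by blast
  ultimately show "s \<in> S"
    by auto
qed

lemma lift_subset_liftD:
  assumes A: "A \<inter> \<tau> = {}" "2 \<le> card A" and B: "B \<inter> \<sigma> = {}" "2 \<le> card B"
    and card: "finite \<tau>" "card \<sigma> = card \<tau>" and sub: "lift \<tau> A \<subseteq> lift \<sigma> B"
  shows "\<sigma> = \<tau>" "A \<subseteq> B"
proof -
  have "\<sigma> \<subseteq> \<tau>"
    using Inter_anti_mono[OF sub] by (simp add: Inter_lift[OF A] Inter_lift[OF B])
  then show "\<sigma> = \<tau>"
    using card by (simp add: card_subset_eq)
  show "A \<subseteq> B"
  proof
    fix x assume "x \<in> A"
    then have "x \<notin> \<tau>" "insert x \<tau> \<in> lift \<sigma> B"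
      using A(1) sub by (auto simp: lift_def)
    then show "x \<in> B"
      using \<open>\<sigma> = \<tau>\<close> by (simp add: insert_mem_lift_iff)
  qed
qed

section \<open>Faces and weights of the representation complex\<close>

locale representation_complex =
  fixes X :: "'v set set" and d k :: nat
  assumes simplicial: "simplicial_complex X" and k_pos: "1 \<le> k" and k_less: "k < d"
begin

abbreviation R :: "'v set set set" where
  "R \<equiv> rep_complex X d k"

lemma finite_face: "s \<in> X \<Longrightarrow> finite s"
  using simplicial by (rule simplicial_complex_finite_face)

lemma finite_rep_complex: "finite R"
proof (rule finite_subset)
  show "R \<subseteq> Pow (faces X k)"
    by (auto simp: rep_complex_def)
  show "finite (Pow (faces X k))"
    using finite_faces[OF simplicial] by simp
qed

lemma faces_pred_kD: "\<tau> \<in> faces X (k - 1) \<Longrightarrow> \<tau> \<in> X \<and> finite \<tau> \<and> card \<tau> = k"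
  using k_pos finite_face by (simp add: faces_def)

lemma finite_link: "\<tau> \<in> faces X (k - 1) \<Longrightarrow> finite (link X \<tau>)"
  using faces_pred_kD simplicial_complex_finite[OF simplicial_complex_link[OF simplicial]] by blast

lemma mem_rep_complex_iff:
  assumes "2 \<le> card S"
  shows "S \<in> R \<longleftrightarrow> card S \<le> d - k + 1 \<and> S \<subseteq> faces X k \<and>
           \<Union>S \<in> faces X (card S + k - 1) \<and> card (\<Inter>S) = k"
proof -
  have "S \<noteq> {}" "\<And>s. S \<noteq> {s}"
    using assms by auto
  then have "S \<in> R \<longleftrightarrow> (\<exists>i. 1 \<le> i \<and> i \<le> d - k \<and> card S = i + 1 \<and> S \<subseteq> faces X k \<and>
          \<Union>S \<in> faces X (i + k) \<and> card (\<Inter>S) = k)"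
    unfolding rep_complex_def by blast
  also have "\<dots> \<longleftrightarrow> card S \<le> d - k + 1 \<and> S \<subseteq> faces X k \<and>
           \<Union>S \<in> faces X (card S + k - 1) \<and> card (\<Inter>S) = k"
  proof
    assume "\<exists>i. 1 \<le> i \<and> i \<le> d - k \<and> card S = i + 1 \<and> S \<subseteq> faces X k \<and>
          \<Union>S \<in> faces X (i + k) \<and> card (\<Inter>S) = k"
    then obtain i where "i \<le> d - k" "card S = i + 1" "S \<subseteq> faces X k"
      "\<Union>S \<in> faces X (i + k)" "card (\<Inter>S) = k"
      by blast
    moreover have "card S + k - 1 = i + k"
      using \<open>card S = i + 1\<close> by simp
    ultimately show "card S \<le> d - k + 1 \<and> S \<subseteq> faces X k \<and>
           \<Union>S \<in> faces X (card S + k - 1) \<and> card (\<Inter>S) = k"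
      by simp
  next
    assume S: "card S \<le> d - k + 1 \<and> S \<subseteq> faces X k \<and>
           \<Union>S \<in> faces X (card S + k - 1) \<and> card (\<Inter>S) = k"
    have "card S + k - 1 = (card S - 1) + k"
      using assms by simp
    then have "1 \<le> card S - 1 \<and> card S - 1 \<le> d - k \<and> card S = (card S - 1) + 1 \<and> S \<subseteq> faces X k \<and>
          \<Union>S \<in> faces X ((card S - 1) + k) \<and> card (\<Inter>S) = k"
      using S assms by auto
    then show "\<exists>i. 1 \<le> i \<and> i \<le> d - k \<and> card S = i + 1 \<and> S \<subseteq> faces X k \<and>
          \<Union>S \<in> faces X (i + k) \<and> card (\<Inter>S) = k"
      by blast
  qed
  finally show ?thesis .
qed

lemma lift_mem_rep_complex_iff:
  assumes \<tau>: "\<tau> \<in> faces X (k - 1)" and A: "A \<inter> \<tau> = {}" "2 \<le> card A"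
  shows "lift \<tau> A \<in> R \<longleftrightarrow> A \<in> link X \<tau> \<and> card A \<le> d - k + 1"
proof -
  have fin: "finite A" "finite \<tau>" and card_\<tau>: "card \<tau> = k"
    using A(2) faces_pred_kD[OF \<tau>] by (auto simp: card_ge_0_finite)
  have card_Un: "card (A \<union> \<tau>) = card A + k"
    using card_Un_disjoint[OF fin A(1)] card_\<tau> by simp
  have "card A + k - 1 + 1 = card (A \<union> \<tau>)"
    using card_Un A(2) by simp
  then have in_X_iff: "A \<union> \<tau> \<in> faces X (card A + k - 1) \<longleftrightarrow> A \<in> link X \<tau>"
    using A(1) by (simp add: faces_def mem_link_iff)
  have faces: "lift \<tau> A \<subseteq> faces X k" if "A \<union> \<tau> \<in> X"
  proof
    fix s assume "s \<in> lift \<tau> A"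
    then obtain x where "x \<in> A" "s = insert x \<tau>"
      by (auto simp: lift_def)
    moreover have "x \<notin> \<tau>" if "x \<in> A"
      using that A(1) by blast
    ultimately show "s \<in> faces X k"
      using fin(2) card_\<tau> simplicial_complex_subset_closed[OF simplicial that, of s]
      by (auto simp: faces_def)
  qed
  have "A \<noteq> {}"
    using A(2) by auto
  then have "lift \<tau> A \<in> R \<longleftrightarrow> card A \<le> d - k + 1 \<and> lift \<tau> A \<subseteq> faces X k \<and>
      A \<union> \<tau> \<in> faces X (card A + k - 1)"
    using A card_\<tau> by (simp add: mem_rep_complex_iff card_lift Union_lift Inter_lift)
  moreover have "A \<union> \<tau> \<in> X" if "A \<in> link X \<tau>"
    using that by (simp add: mem_link_iff)
  ultimately show ?thesis
    using faces in_X_iff by blast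
qed

lemma rep_complex_faceE:
  assumes "S \<in> R" "2 \<le> card S"
  obtains \<tau> A where "\<tau> \<in> faces X (k - 1)" "A \<in> link X \<tau>" "S = lift \<tau> A"
proof -
  define \<tau> where "\<tau> = \<Inter>S"
  have faces: "S \<subseteq> faces X k" and card_\<tau>: "card \<tau> = k"
    using assms by (auto simp: mem_rep_complex_iff \<tau>_def)
  have vertex: "\<exists>x. x \<notin> \<tau> \<and> s = insert x \<tau>" if "s \<in> S" for s
  proof -
    have "s \<in> X" "card s = Suc (card \<tau>)" "\<tau> \<subseteq> s"
      using that faces card_\<tau> by (auto simp: faces_def \<tau>_def)
    then show ?thesis
      using subset_card_SucE finite_face by metis
  qed
  have "S = lift \<tau> (\<Union>S - \<tau>)"
    using vertex by (rule eq_lift_Union_Diff)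
  moreover obtain s where "s \<in> S"
    using assms(2) by fastforce
  then have "\<tau> \<in> X"
    using faces simplicial_complex_subset_closed[OF simplicial, of s \<tau>] by (auto simp: faces_def \<tau>_def)
  then have "\<tau> \<in> faces X (k - 1)"
    using card_\<tau> k_pos by (simp add: faces_def)
  moreover have "(\<Union>S - \<tau>) \<inter> \<tau> = {}"
    by blast
  ultimately show ?thesis
    using that assms lift_mem_rep_complex_iff card_lift by metis
qed

lemma lift_mem_rep_complex:
  assumes "\<tau> \<in> faces X (k - 1)" "A \<in> link X \<tau>" "2 \<le> card A" "card A \<le> d - k + 1"
  shows "lift \<tau> A \<in> R"
  using assms lift_mem_rep_complex_iff by (simp add: mem_link_iff)

lemma is_edge_rep_complex_iff:
  "is_edge R a b \<longleftrightarrow>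
     (\<exists>\<tau>\<in>faces X (k - 1). \<exists>u v. is_edge (link X \<tau>) u v \<and> a = insert u \<tau> \<and> b = insert v \<tau>)"
proof
  assume "is_edge R a b"
  then have ab: "a \<noteq> b" "{a, b} \<in> R"
    by (auto simp: is_edge_def)
  have "2 \<le> card {a, b}"
    using ab(1) by simp
  then obtain \<tau> A where \<tau>: "\<tau> \<in> faces X (k - 1)" and A: "A \<in> link X \<tau>" "{a, b} = lift \<tau> A"
    by (rule rep_complex_faceE[OF ab(2)])
  have "a \<in> lift \<tau> A" "b \<in> lift \<tau> A"
    by (simp_all flip: A(2))
  then obtain u v where uv: "u \<in> A" "v \<in> A" "a = insert u \<tau>" "b = insert v \<tau>"
    unfolding lift_def by blast
  have "{u, v} \<in> link X \<tau>"
    using uv(1,2) by (intro link_subset_closed[OF simplicial A(1)]) auto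
  then have "is_edge (link X \<tau>) u v"
    using ab(1) uv by (auto simp: is_edge_def)
  then show "\<exists>\<tau>\<in>faces X (k - 1). \<exists>u v. is_edge (link X \<tau>) u v \<and> a = insert u \<tau> \<and> b = insert v \<tau>"
    using \<tau> uv by blast
next
  assume "\<exists>\<tau>\<in>faces X (k - 1). \<exists>u v. is_edge (link X \<tau>) u v \<and> a = insert u \<tau> \<and> b = insert v \<tau>"
  then obtain \<tau> u v where \<tau>: "\<tau> \<in> faces X (k - 1)" and uv: "is_edge (link X \<tau>) u v"
    and ab: "a = insert u \<tau>" "b = insert v \<tau>"
    by blast
  have "lift \<tau> {u, v} \<in> R"
    using uv k_less by (intro lift_mem_rep_complex[OF \<tau>]) (auto simp: is_edge_def)
  moreover have "a \<noteq> b"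
    using uv ab by (auto simp: is_edge_link_iff)
  ultimately show "is_edge R a b"
    using ab by (simp add: is_edge_def lift_insert lift_empty)
qed

lemma is_tri_rep_complex_iff:
  assumes "2 \<le> d - k"
  shows "is_tri R a b c \<longleftrightarrow>
     (\<exists>\<tau>\<in>faces X (k - 1). \<exists>u v w. is_tri (link X \<tau>) u v w \<and>
        a = insert u \<tau> \<and> b = insert v \<tau> \<and> c = insert w \<tau>)"
proof
  assume "is_tri R a b c"
  then have abc: "a \<noteq> b" "b \<noteq> c" "a \<noteq> c" "{a, b, c} \<in> R"
    by (auto simp: is_tri_def)
  have "2 \<le> card {a, b, c}"
    using abc(1-3) by simp
  then obtain \<tau> A where \<tau>: "\<tau> \<in> faces X (k - 1)" and A: "A \<in> link X \<tau>" "{a, b, c} = lift \<tau> A"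
    by (rule rep_complex_faceE[OF abc(4)])
  have "a \<in> lift \<tau> A" "b \<in> lift \<tau> A" "c \<in> lift \<tau> A"
    by (simp_all flip: A(2))
  then obtain u v w where uvw: "u \<in> A" "v \<in> A" "w \<in> A"
    "a = insert u \<tau>" "b = insert v \<tau>" "c = insert w \<tau>"
    unfolding lift_def by blast
  have "{u, v, w} \<in> link X \<tau>"
    using uvw(1-3) by (intro link_subset_closed[OF simplicial A(1)]) auto
  then have "is_tri (link X \<tau>) u v w"
    using abc uvw by (auto simp: is_tri_def)
  then show "\<exists>\<tau>\<in>faces X (k - 1). \<exists>u v w. is_tri (link X \<tau>) u v w \<and>
        a = insert u \<tau> \<and> b = insert v \<tau> \<and> c = insert w \<tau>"
    using \<tau> uvw by blast
next
  assume "\<exists>\<tau>\<in>faces X (k - 1). \<exists>u v w. is_tri (link X \<tau>) u v w \<and>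
        a = insert u \<tau> \<and> b = insert v \<tau> \<and> c = insert w \<tau>"
  then obtain \<tau> u v w where \<tau>: "\<tau> \<in> faces X (k - 1)" and uvw: "is_tri (link X \<tau>) u v w"
    and abc: "a = insert u \<tau>" "b = insert v \<tau>" "c = insert w \<tau>"
    by blast
  have "lift \<tau> {u, v, w} \<in> R"
    using uvw assms by (intro lift_mem_rep_complex[OF \<tau>]) (auto simp: is_tri_def)
  moreover have "a \<noteq> b" "b \<noteq> c" "a \<noteq> c"
    using uvw abc by (auto simp: is_tri_link_iff)
  ultimately show "is_tri R a b c"
    using abc by (simp add: is_tri_def lift_insert lift_empty)
qed

lemma two_le_dim_if_is_tri:
  assumes "is_tri R a b c"
  shows "2 \<le> d - k"
proof -
  have "{a, b, c} \<in> R" "card {a, b, c} = 3"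
    using assms by (auto simp: is_tri_def)
  then show ?thesis
    using mem_rep_complex_iff[of "{a, b, c}"] by simp
qed

lemma top_faces_above_lift:
  assumes \<tau>: "\<tau> \<in> faces X (k - 1)" and A: "A \<inter> \<tau> = {}" "2 \<le> card A"
  shows "{S \<in> faces R (d - k). lift \<tau> A \<subseteq> S} = lift \<tau> ` {B \<in> faces (link X \<tau>) (d - k). A \<subseteq> B}"
proof (intro equalityI subsetI)
  fix S assume "S \<in> {S \<in> faces R (d - k). lift \<tau> A \<subseteq> S}"
  then have S: "S \<in> R" "card S = d - k + 1" "lift \<tau> A \<subseteq> S"
    by (auto simp: faces_def)
  have "2 \<le> card S"
    using S(2) k_less by simp
  then obtain \<sigma> B where \<sigma>: "\<sigma> \<in> faces X (k - 1)" and B: "B \<in> link X \<sigma>" "S = lift \<sigma> B"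
    by (rule rep_complex_faceE[OF S(1)])
  have B_disj: "B \<inter> \<sigma> = {}"
    using B(1) by (simp add: mem_link_iff)
  have card_B: "card B = d - k + 1"
    using card_lift[OF B_disj] S(2) B(2) by simp
  then have "\<sigma> = \<tau>" "A \<subseteq> B"
    using lift_subset_liftD[OF A B_disj] faces_pred_kD[OF \<sigma>] faces_pred_kD[OF \<tau>] S(3) B(2) k_less
    by simp_all
  then show "S \<in> lift \<tau> ` {B \<in> faces (link X \<tau>) (d - k). A \<subseteq> B}"
    using B card_B by (auto simp: faces_def)
next
  fix S assume "S \<in> lift \<tau> ` {B \<in> faces (link X \<tau>) (d - k). A \<subseteq> B}"
  then obtain B where B: "B \<in> link X \<tau>" "card B = d - k + 1" "A \<subseteq> B" and S: "S = lift \<tau> B"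
    by (auto simp: faces_def)
  have "S \<in> R"
    using lift_mem_rep_complex[OF \<tau> B(1)] B(2) k_less S by simp
  moreover have "card S = d - k + 1"
    using card_lift[of B \<tau>] B S by (simp add: mem_link_iff)
  moreover have "lift \<tau> A \<subseteq> S"
    using B(3) S by (auto simp: lift_def)
  ultimately show "S \<in> {S \<in> faces R (d - k). lift \<tau> A \<subseteq> S}"
    by (simp add: faces_def)
qed

definition link_weight :: "'v set \<Rightarrow> real" where
  "link_weight \<tau> = real (card (faces (link X \<tau>) (d - k))) / real (card (faces R (d - k)))"

lemma link_weight_nonneg: "0 \<le> link_weight \<tau>"
  by (simp add: link_weight_def)

lemma weight_lift:
  assumes \<tau>: "\<tau> \<in> faces X (k - 1)" and A: "A \<inter> \<tau> = {}" "2 \<le> card A"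
  shows "weight R (d - k) (lift \<tau> A) = link_weight \<tau> * weight (link X \<tau>) (d - k) A"
proof -
  let ?above = "{B \<in> faces (link X \<tau>) (d - k). A \<subseteq> B}"
  have "inj_on (lift \<tau>) ?above"
    by (rule inj_on_subset[OF inj_on_lift]) (auto simp: faces_def mem_link_iff)
  then have above: "card {S \<in> faces R (d - k). lift \<tau> A \<subseteq> S} = card ?above"
    unfolding top_faces_above_lift[OF assms] by (rule card_image)
  have "card ?above = 0" if "card (faces (link X \<tau>) (d - k)) = 0"
  proof -
    have "finite (faces (link X \<tau>) (d - k))"
      using finite_link[OF \<tau>] by (simp add: faces_def)
    then show ?thesis
      using that by simp
  qed
  then show ?thesis
    unfolding weight_def link_weight_def above card_lift[OF A(1)]
    by (cases "card (faces (link X \<tau>) (d - k)) = 0") (simp_all add: field_simps)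
qed

lemma cnorm_UN_lift:
  assumes "\<And>\<tau>. \<tau> \<in> faces X (k - 1) \<Longrightarrow> \<A> \<tau> \<subseteq> {A \<in> link X \<tau>. 2 \<le> card A}"
  shows "cnorm R (d - k) (\<Union>\<tau>\<in>faces X (k - 1). lift \<tau> ` \<A> \<tau>)
       = (\<Sum>\<tau>\<in>faces X (k - 1). link_weight \<tau> * cnorm (link X \<tau>) (d - k) (\<A> \<tau>))"
proof -
  let ?T = "faces X (k - 1)"
  have disj: "A \<inter> \<tau> = {}" "2 \<le> card A" if "\<tau> \<in> ?T" "A \<in> \<A> \<tau>" for \<tau> A
    using assms[OF that(1)] that(2) by (auto simp: mem_link_iff)
  have fin: "finite (lift \<tau> ` \<A> \<tau>)" if "\<tau> \<in> ?T" for \<tau>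
  proof (rule finite_imageI, rule finite_subset)
    show "\<A> \<tau> \<subseteq> link X \<tau>"
      using assms[OF that] by blast
  qed (rule finite_link[OF that])
  have "lift \<tau> ` \<A> \<tau> \<inter> lift \<tau>' ` \<A> \<tau>' = {}"
    if \<tau>: "\<tau> \<in> ?T" and \<tau>': "\<tau>' \<in> ?T" and "\<tau> \<noteq> \<tau>'" for \<tau> \<tau>'
  proof -
    have "lift \<tau> A \<noteq> lift \<tau>' A'" if "A \<in> \<A> \<tau>" "A' \<in> \<A> \<tau>'" for A A'
      using lift_eq_lift_imp_eq[OF disj[OF \<tau> that(1)] disj[OF \<tau>' that(2)]] \<open>\<tau> \<noteq> \<tau>'\<close> by blast
    then show ?thesis
      by blast
  qed
  then have "cnorm R (d - k) (\<Union>\<tau>\<in>?T. lift \<tau> ` \<A> \<tau>) = (\<Sum>\<tau>\<in>?T. cnorm R (d - k) (lift \<tau> ` \<A> \<tau>))"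
    unfolding cnorm_def using fin finite_faces[OF simplicial] by (intro sum.UNION_disjoint) auto
  also have "\<dots> = (\<Sum>\<tau>\<in>?T. link_weight \<tau> * cnorm (link X \<tau>) (d - k) (\<A> \<tau>))"
  proof (rule sum.cong[OF refl])
    fix \<tau> assume \<tau>: "\<tau> \<in> ?T"
    have "inj_on (lift \<tau>) (\<A> \<tau>)"
      by (rule inj_on_subset[OF inj_on_lift]) (use disj[OF \<tau>] in blast)
    then show "cnorm R (d - k) (lift \<tau> ` \<A> \<tau>) = link_weight \<tau> * cnorm (link X \<tau>) (d - k) (\<A> \<tau>)"
      unfolding cnorm_def sum_distrib_left
      by (simp add: sum.reindex weight_lift[OF \<tau> disj[OF \<tau>]])
  qed
  finally show ?thesis .
qed

section \<open>Restricting and gluing cochains\<close>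

lemma supp1_rep_complex_eq_UN:
  assumes "\<And>\<tau> u v. \<tau> \<in> faces X (k - 1) \<Longrightarrow> is_edge (link X \<tau>) u v \<Longrightarrow>
             g \<tau> (u, v) = f (insert u \<tau>, insert v \<tau>)"
  shows "supp1 R G f = (\<Union>\<tau>\<in>faces X (k - 1). lift \<tau> ` supp1 (link X \<tau>) G (g \<tau>))"
proof (intro equalityI subsetI)
  fix S assume "S \<in> supp1 R G f"
  then obtain a b where S: "S = {a, b}" "is_edge R a b" "f (a, b) \<noteq> \<one>\<^bsub>G\<^esub>"
    unfolding supp1_def by blast
  obtain \<tau> u v where \<tau>: "\<tau> \<in> faces X (k - 1)" and uv: "is_edge (link X \<tau>) u v"
    and ab: "a = insert u \<tau>" "b = insert v \<tau>"
    using S(2) unfolding is_edge_rep_complex_iff by blast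
  have "g \<tau> (u, v) \<noteq> \<one>\<^bsub>G\<^esub>"
    using S(3) assms[OF \<tau> uv] ab by simp
  then have "{u, v} \<in> supp1 (link X \<tau>) G (g \<tau>)"
    using uv unfolding supp1_def by blast
  moreover have "S = lift \<tau> {u, v}"
    using S(1) ab by (simp add: lift_insert lift_empty)
  ultimately show "S \<in> (\<Union>\<tau>\<in>faces X (k - 1). lift \<tau> ` supp1 (link X \<tau>) G (g \<tau>))"
    using \<tau> by blast
next
  fix S assume "S \<in> (\<Union>\<tau>\<in>faces X (k - 1). lift \<tau> ` supp1 (link X \<tau>) G (g \<tau>))"
  then obtain \<tau> u v where \<tau>: "\<tau> \<in> faces X (k - 1)" and uv: "is_edge (link X \<tau>) u v"
    and g: "g \<tau> (u, v) \<noteq> \<one>\<^bsub>G\<^esub>" and S: "S = lift \<tau> {u, v}"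
    unfolding supp1_def by blast
  have "is_edge R (insert u \<tau>) (insert v \<tau>)"
    using \<tau> uv is_edge_rep_complex_iff by blast
  moreover have "f (insert u \<tau>, insert v \<tau>) \<noteq> \<one>\<^bsub>G\<^esub>"
    using g assms[OF \<tau> uv] by simp
  moreover have "S = {insert u \<tau>, insert v \<tau>}"
    using S by (simp add: lift_insert lift_empty)
  ultimately show "S \<in> supp1 R G f"
    unfolding supp1_def by blast
qed

lemma supp2_rep_complex_eq_UN:
  assumes "2 \<le> d - k"
    and "\<And>\<tau> u v w. \<tau> \<in> faces X (k - 1) \<Longrightarrow> is_tri (link X \<tau>) u v w \<Longrightarrow>
             g \<tau> (u, v, w) = f (insert u \<tau>, insert v \<tau>, insert w \<tau>)"
  shows "supp2 R G f = (\<Union>\<tau>\<in>faces X (k - 1). lift \<tau> ` supp2 (link X \<tau>) G (g \<tau>))"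
proof (intro equalityI subsetI)
  fix S assume "S \<in> supp2 R G f"
  then obtain a b c where S: "S = {a, b, c}" "is_tri R a b c" "f (a, b, c) \<noteq> \<one>\<^bsub>G\<^esub>"
    unfolding supp2_def by blast
  obtain \<tau> u v w where \<tau>: "\<tau> \<in> faces X (k - 1)" and uvw: "is_tri (link X \<tau>) u v w"
    and abc: "a = insert u \<tau>" "b = insert v \<tau>" "c = insert w \<tau>"
    using S(2) unfolding is_tri_rep_complex_iff[OF assms(1)] by blast
  have "g \<tau> (u, v, w) \<noteq> \<one>\<^bsub>G\<^esub>"
    using S(3) assms(2)[OF \<tau> uvw] abc by simp
  then have "{u, v, w} \<in> supp2 (link X \<tau>) G (g \<tau>)"
    using uvw unfolding supp2_def by blast
  moreover have "S = lift \<tau> {u, v, w}"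
    using S(1) abc by (simp add: lift_insert lift_empty)
  ultimately show "S \<in> (\<Union>\<tau>\<in>faces X (k - 1). lift \<tau> ` supp2 (link X \<tau>) G (g \<tau>))"
    using \<tau> by blast
next
  fix S assume "S \<in> (\<Union>\<tau>\<in>faces X (k - 1). lift \<tau> ` supp2 (link X \<tau>) G (g \<tau>))"
  then obtain \<tau> u v w where \<tau>: "\<tau> \<in> faces X (k - 1)" and uvw: "is_tri (link X \<tau>) u v w"
    and g: "g \<tau> (u, v, w) \<noteq> \<one>\<^bsub>G\<^esub>" and S: "S = lift \<tau> {u, v, w}"
    unfolding supp2_def by blast
  have "is_tri R (insert u \<tau>) (insert v \<tau>) (insert w \<tau>)"
    using \<tau> uvw is_tri_rep_complex_iff[OF assms(1)] by blast
  moreover have "f (insert u \<tau>, insert v \<tau>, insert w \<tau>) \<noteq> \<one>\<^bsub>G\<^esub>"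
    using g assms(2)[OF \<tau> uvw] by simp
  moreover have "S = {insert u \<tau>, insert v \<tau>, insert w \<tau>}"
    using S by (simp add: lift_insert lift_empty)
  ultimately show "S \<in> supp2 R G f"
    unfolding supp2_def by blast
qed

lemma cnorm_supp1_rep_complex:
  assumes "\<And>\<tau> u v. \<tau> \<in> faces X (k - 1) \<Longrightarrow> is_edge (link X \<tau>) u v \<Longrightarrow>
             g \<tau> (u, v) = f (insert u \<tau>, insert v \<tau>)"
  shows "cnorm R (d - k) (supp1 R G f)
       = (\<Sum>\<tau>\<in>faces X (k - 1). link_weight \<tau> * cnorm (link X \<tau>) (d - k) (supp1 (link X \<tau>) G (g \<tau>)))"
proof -
  have "supp1 R G f = (\<Union>\<tau>\<in>faces X (k - 1). lift \<tau> ` supp1 (link X \<tau>) G (g \<tau>))"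
    using assms by (rule supp1_rep_complex_eq_UN)
  then show ?thesis
    by (simp only:) (rule cnorm_UN_lift, auto simp: supp1_def is_edge_def)
qed

lemma cnorm_supp2_rep_complex:
  assumes "2 \<le> d - k"
    and "\<And>\<tau> u v w. \<tau> \<in> faces X (k - 1) \<Longrightarrow> is_tri (link X \<tau>) u v w \<Longrightarrow>
             g \<tau> (u, v, w) = f (insert u \<tau>, insert v \<tau>, insert w \<tau>)"
  shows "cnorm R (d - k) (supp2 R G f)
       = (\<Sum>\<tau>\<in>faces X (k - 1). link_weight \<tau> * cnorm (link X \<tau>) (d - k) (supp2 (link X \<tau>) G (g \<tau>)))"
proof -
  have "supp2 R G f = (\<Union>\<tau>\<in>faces X (k - 1). lift \<tau> ` supp2 (link X \<tau>) G (g \<tau>))"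
    using assms by (rule supp2_rep_complex_eq_UN)
  then show ?thesis
    by (simp only:) (rule cnorm_UN_lift, auto simp: supp2_def is_tri_def)
qed

definition link_restriction :: "('g, 'b) monoid_scheme \<Rightarrow> 'v set \<Rightarrow> ('v set \<times> 'v set \<Rightarrow> 'g) \<Rightarrow> 'v \<times> 'v \<Rightarrow> 'g" where
  "link_restriction G \<tau> f =
     (\<lambda>(u, v). if is_edge (link X \<tau>) u v then f (insert u \<tau>, insert v \<tau>) else \<one>\<^bsub>G\<^esub>)"

lemma link_restriction_in_C1:
  assumes "f \<in> C1 R G" "\<tau> \<in> faces X (k - 1)"
  shows "link_restriction G \<tau> f \<in> C1 (link X \<tau>) G"
  unfolding C1_def
proof (intro CollectI allI conjI impI)
  fix u v assume uv: "is_edge (link X \<tau>) u v"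
  then have "is_edge R (insert u \<tau>) (insert v \<tau>)"
    using assms(2) is_edge_rep_complex_iff by blast
  then show "link_restriction G \<tau> f (u, v) \<in> carrier G"
    "link_restriction G \<tau> f (v, u) = inv\<^bsub>G\<^esub> link_restriction G \<tau> f (u, v)"
    using assms(1) uv is_edge_sym[OF uv] by (simp_all add: C1_def link_restriction_def)
next
  fix u v assume "\<not> is_edge (link X \<tau>) u v"
  then show "link_restriction G \<tau> f (u, v) = \<one>\<^bsub>G\<^esub>"
    by (simp add: link_restriction_def)
qed

lemma d1_link_restriction:
  assumes "2 \<le> d - k" "\<tau> \<in> faces X (k - 1)" "is_tri (link X \<tau>) u v w"
  shows "d1 (link X \<tau>) G (link_restriction G \<tau> f) (u, v, w)
       = d1 R G f (insert u \<tau>, insert v \<tau>, insert w \<tau>)"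
proof -
  have "is_tri R (insert u \<tau>) (insert v \<tau>) (insert w \<tau>)"
    using assms is_tri_rep_complex_iff by blast
  then show ?thesis
    using assms(3) is_tri_link_edges[OF simplicial assms(3)]
    by (simp add: d1_def link_restriction_def)
qed

text \<open>An edge \<open>{a, b}\<close> of \<open>R\<close> is the edge between the vertices \<open>a - b\<close> and \<open>b - a\<close>
  of the link of \<open>a \<inter> b\<close>.\<close>
definition glue :: "('g, 'b) monoid_scheme \<Rightarrow> ('v set \<Rightarrow> 'v \<times> 'v \<Rightarrow> 'g) \<Rightarrow> 'v set \<times> 'v set \<Rightarrow> 'g" where
  "glue G h = (\<lambda>(a, b). if is_edge R a b
     then h (a \<inter> b) (the_elem (a - b), the_elem (b - a)) else \<one>\<^bsub>G\<^esub>)"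

lemma glue_lift:
  assumes "\<tau> \<in> faces X (k - 1)" "is_edge (link X \<tau>) u v"
  shows "glue G h (insert u \<tau>, insert v \<tau>) = h \<tau> (u, v)"
proof -
  have "is_edge R (insert u \<tau>) (insert v \<tau>)"
    using assms is_edge_rep_complex_iff by blast
  moreover have "u \<noteq> v" "u \<notin> \<tau>" "v \<notin> \<tau>"
    using assms(2) by (auto simp: is_edge_link_iff)
  then have "insert u \<tau> \<inter> insert v \<tau> = \<tau>" "insert u \<tau> - insert v \<tau> = {u}" "insert v \<tau> - insert u \<tau> = {v}"
    by auto
  ultimately show ?thesis
    by (simp add: glue_def)
qed

lemma glue_in_C1:
  assumes "\<And>\<tau>. \<tau> \<in> faces X (k - 1) \<Longrightarrow> h \<tau> \<in> C1 (link X \<tau>) G"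
  shows "glue G h \<in> C1 R G"
  unfolding C1_def
proof (intro CollectI allI conjI impI)
  fix a b assume "is_edge R a b"
  then obtain \<tau> u v where \<tau>: "\<tau> \<in> faces X (k - 1)" and uv: "is_edge (link X \<tau>) u v"
    and ab: "a = insert u \<tau>" "b = insert v \<tau>"
    unfolding is_edge_rep_complex_iff by blast
  have "glue G h (a, b) = h \<tau> (u, v)" "glue G h (b, a) = h \<tau> (v, u)"
    using ab glue_lift[OF \<tau> uv] glue_lift[OF \<tau> is_edge_sym[OF uv]] by simp_all
  then show "glue G h (a, b) \<in> carrier G" "glue G h (b, a) = inv\<^bsub>G\<^esub> glue G h (a, b)"
    using assms[OF \<tau>] uv by (auto simp: C1_def)
next
  fix a b assume "\<not> is_edge R a b"
  then show "glue G h (a, b) = \<one>\<^bsub>G\<^esub>"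
    by (simp add: glue_def)
qed

lemma glue_in_Z1:
  assumes "\<And>\<tau>. \<tau> \<in> faces X (k - 1) \<Longrightarrow> h \<tau> \<in> Z1 (link X \<tau>) G"
  shows "glue G h \<in> Z1 R G"
proof -
  have "glue G h \<in> C1 R G"
    using assms by (intro glue_in_C1) (simp add: Z1_def)
  moreover have "d1 R G (glue G h) (a, b, c) = \<one>\<^bsub>G\<^esub>" if tri: "is_tri R a b c" for a b c
  proof -
    obtain \<tau> u v w where \<tau>: "\<tau> \<in> faces X (k - 1)" and uvw: "is_tri (link X \<tau>) u v w"
      and abc: "a = insert u \<tau>" "b = insert v \<tau>" "c = insert w \<tau>"
      using tri unfolding is_tri_rep_complex_iff[OF two_le_dim_if_is_tri[OF tri]] by blast
    have "d1 (link X \<tau>) G (h \<tau>) (u, v, w) = \<one>\<^bsub>G\<^esub>"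
      using assms[OF \<tau>] uvw by (simp add: Z1_def)
    moreover note edges = is_tri_link_edges[OF simplicial uvw]
    note glue_eq = glue_lift[where G = G and h = h, OF \<tau>]
    ultimately show ?thesis
      using tri uvw abc glue_eq[OF edges(1)] glue_eq[OF edges(2)] glue_eq[OF edges(3)]
      by (simp add: d1_def)
  qed
  ultimately show ?thesis
    by (simp add: Z1_def)
qed

lemma cnorm_supp1_glue:
  "cnorm R (d - k) (supp1 R G (\<lambda>e. f e \<otimes>\<^bsub>G\<^esub> inv\<^bsub>G\<^esub> glue G h e))
     = (\<Sum>\<tau>\<in>faces X (k - 1). link_weight \<tau> * cnorm (link X \<tau>) (d - k)
          (supp1 (link X \<tau>) G (\<lambda>e. link_restriction G \<tau> f e \<otimes>\<^bsub>G\<^esub> inv\<^bsub>G\<^esub> h \<tau> e)))"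
  by (rule cnorm_supp1_rep_complex) (simp add: link_restriction_def glue_lift)

lemma cnorm_supp2_d1:
  assumes "2 \<le> d - k"
  shows "cnorm R (d - k) (supp2 R G (d1 R G f))
     = (\<Sum>\<tau>\<in>faces X (k - 1). link_weight \<tau> * cnorm (link X \<tau>) (d - k)
          (supp2 (link X \<tau>) G (d1 (link X \<tau>) G (link_restriction G \<tau> f))))"
  using assms by (rule cnorm_supp2_rep_complex) (simp add: d1_link_restriction assms)

lemma cocycle_expansion_ge_rep_complex:
  assumes G: "group G" and dim: "2 \<le> d - k"
    and local: "\<And>\<tau>. \<tau> \<in> faces X (k - 1) \<Longrightarrow> cocycle_expansion_ge (link X \<tau>) (d - k) G \<gamma>"
  shows "cocycle_expansion_ge R (d - k) G \<gamma>"
proof (cases "\<gamma> \<le> 0")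
  case True
  then show ?thesis
    using cocycle_expansion_ge_nonpos[OF G finite_rep_complex] by blast
next
  case False
  let ?T = "faces X (k - 1)"
  show ?thesis
    unfolding cocycle_expansion_ge_def
  proof
    fix f assume f: "f \<in> C1 R G"
    let ?f = "\<lambda>\<tau>. link_restriction G \<tau> f"
    obtain h where h: "\<forall>\<tau>\<in>?T. h \<tau> \<in> Z1 (link X \<tau>) G \<and>
        dist1 (link X \<tau>) (d - k) G (?f \<tau>) (Z1 (link X \<tau>) G)
          = cnorm (link X \<tau>) (d - k) (supp1 (link X \<tau>) G (\<lambda>e. ?f \<tau> e \<otimes>\<^bsub>G\<^esub> inv\<^bsub>G\<^esub> h \<tau> e))"
      by (rule nearest_cocycles[OF G finite_link])
    then have "glue G h \<in> Z1 R G"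
      by (intro glue_in_Z1) blast
    have "\<gamma> * dist1 R (d - k) G f (Z1 R G)
        \<le> \<gamma> * cnorm R (d - k) (supp1 R G (\<lambda>e. f e \<otimes>\<^bsub>G\<^esub> inv\<^bsub>G\<^esub> glue G h e))"
      using dist1_le[OF finite_rep_complex \<open>glue G h \<in> Z1 R G\<close>] False by simp
    also have "\<dots> = (\<Sum>\<tau>\<in>?T. link_weight \<tau> * (\<gamma> * dist1 (link X \<tau>) (d - k) G (?f \<tau>) (Z1 (link X \<tau>) G)))"
      using h by (simp add: cnorm_supp1_glue sum_distrib_left ac_simps)
    also have "\<dots> \<le> (\<Sum>\<tau>\<in>?T. link_weight \<tau> * cnorm (link X \<tau>) (d - k) (supp2 (link X \<tau>) G (d1 (link X \<tau>) G (?f \<tau>))))"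
      using local link_restriction_in_C1[OF f]
      by (intro sum_mono mult_left_mono link_weight_nonneg) (simp add: cocycle_expansion_ge_def)
    also have "\<dots> = cnorm R (d - k) (supp2 R G (d1 R G f))"
      by (simp add: cnorm_supp2_d1[OF dim])
    finally show "\<gamma> * dist1 R (d - k) G f (Z1 R G) \<le> cnorm R (d - k) (supp2 R G (d1 R G f))" .
  qed
qed

end

theorem mainTheorem3:
  fixes X :: "'v set set" and d k :: nat and G :: "('g, 'b) monoid_scheme" and \<gamma> :: real
  assumes "simplicial_complex X" and "pure X d"
    and "group G"
    and "coboundary_expander X d G \<gamma>"
    and "1 \<le> k" and "k \<le> d - 1"
    and "f \<in> C1 (rep_complex X d k) G"
  shows "cnorm (rep_complex X d k) (d - k) (supp2 (rep_complex X d k) G (d1 (rep_complex X d k) G f))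
           \<ge> \<gamma> * dist1 (rep_complex X d k) (d - k) G f (Z1 (rep_complex X d k) G)"
proof -
  interpret representation_complex X d k
    using assms(1,5,6) by unfold_locales auto
  have "cocycle_expansion_ge (rep_complex X d k) (d - k) G \<gamma>"
  proof (cases "2 \<le> d - k")
    case True
    have "h1_ge (link X \<tau>) (d - k) G \<gamma>" if "\<tau> \<in> faces X (k - 1)" for \<tau>
      using assms(4) faces_pred_kD[OF that] True by (auto simp: coboundary_expander_def)
    then show ?thesis
      using True assms(1,3) faces_pred_kD
      by (intro cocycle_expansion_ge_rep_complex cocycle_expansion_ge_if_h1_ge simplicial_complex_link) auto
  next
    case False
    then show ?thesis
      using cocycle_expansion_ge_no_triangles[OF assms(3) finite_rep_complex] two_le_dim_if_is_tri by blast
  qed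
  then show ?thesis
    using assms(7) by (simp add: cocycle_expansion_ge_def)
qed

end
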